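(* Let $\mathcal{V}$ be a finite vocabulary with $|\mathcal{V}|=N$, let $\varepsilon>0$, and let $L_1,\dots,L_m$ be lists, each containing every word of $\mathcal{V}$ exactly once; let $\Phi^l:\mathcal{V}\to\{0,\dots,N-1\}$ be the bijection giving the index of a word in $L_l$, and $d^l_{\mathcal{V}}(w,w')=|\Phi^l(w)-\Phi^l(w')|$. Put $d_{\max}(w,w')=\max_{1\le l\le m} d^l_{\mathcal{V}}(w,w')$. Define the word-level randomized mechanism $\mathcal{M}:\mathcal{V}\to\mathcal{V}$ as follows: on input $w$, for each $l$ independently draw $X_l$ from the two-sided geometric distribution with $\mathbb{P}[X_l=x]=\frac{e^{\varepsilon}-1}{e^{\varepsilon}+1}e^{-\varepsilon|x|}$ ($x\in\mathbb{Z}$), set $w'_l=(\Phi^l)^{-1}(t(\Phi^l(w)+X_l))$ where $t$ clamps an integer to $\{0,\dots,N-1\}$ (values below $0$ become $0$, values above $N-1$ become $N-1$), and output one of $w'_1,\dots,w'_m$ chosen uniformly at random. Extend $\mathcal{M}$ to sentences $s=w_1\cdots w_n\in\mathcal{V}^n$ by applying it independently to each word, so that $\mathbb{P}[\mathcal{M}(s)=z_1\cdots z_n]=\prod_{i=1}^n\mathbb{P}[\mathcal{M}(w_i)=z_i]$, and for $s=w_1\cdots w_n$, $s'=w'_1\cdots w'_n$ define $\mathcal{D}(s,s')=\sum_{i=1}^n d_{\max}(w_i,w'_i)$. Then for all $n$, all $s,s',z\in\mathcal{V}^n$, $$\frac{\mathbb{P}[\mathcal{M}(s)=z]}{\mathbb{P}[\mathcal{M}(s')=z]}\le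 \exp\big(\varepsilon\,\mathcal{D}(s,s')\big).$$
   Context: Sentences are finite sequences (concatenations) of words from $\mathcal{V}$; $\mathcal{V}^n$ denotes sentences of length $n$. *)

theory Defs
  imports "HOL-Probability.Probability"
begin

definition word_index :: "'a list \<Rightarrow> 'a \<Rightarrow> nat" where
  "word_index xs w = (LEAST i. i < length xs \<and> xs ! i = w)"

definition clamp :: "nat \<Rightarrow> int \<Rightarrow> nat" where
  "clamp N k = nat (max 0 (min (int N - 1) k))"

definition two_sided_geom :: "real \<Rightarrow> int pmf" where
  "two_sided_geom \<epsilon> = embed_pmf (\<lambda>x. (exp \<epsilon> - 1) / (exp \<epsilon> + 1) * exp (- \<epsilon> * real_of_int \<bar>x\<bar>))"

definition word_mech :: "real \<Rightarrow> 'a list list \<Rightarrow> 'a \<Rightarrow> 'a pmf" where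
  "word_mech \<epsilon> L w =
     do { X \<leftarrow> Pi_pmf {..<length L} 0 (\<lambda>_. two_sided_geom \<epsilon>);
          l \<leftarrow> pmf_of_set {..<length L};
          return_pmf ((L ! l) ! clamp (length (L ! l)) (int (word_index (L ! l) w) + X l)) }"

fun sent_mech :: "real \<Rightarrow> 'a list list \<Rightarrow> 'a list \<Rightarrow> 'a list pmf" where
  "sent_mech \<epsilon> L [] = return_pmf []"
| "sent_mech \<epsilon> L (w # ws) =
     do { z \<leftarrow> word_mech \<epsilon> L w; zs \<leftarrow> sent_mech \<epsilon> L ws; return_pmf (z # zs) }"

definition d_list :: "'a list \<Rightarrow> 'a \<Rightarrow> 'a \<Rightarrow> nat" where
  "d_list xs w w' = nat \<bar>int (word_index xs w) - int (word_index xs w')\<bar>"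

definition d_max :: "'a list list \<Rightarrow> 'a \<Rightarrow> 'a \<Rightarrow> nat" where
  "d_max L w w' = Max ((\<lambda>l. d_list (L ! l) w w') ` {..<length L})"

definition sent_dist :: "'a list list \<Rightarrow> 'a list \<Rightarrow> 'a list \<Rightarrow> nat" where
  "sent_dist L s s' = (\<Sum>i<length s. d_max L (s ! i) (s' ! i))"

end

theory Submission
  imports Defs
begin

(* The output w'_l of list l is a deterministic function (clamp, then look up in the list) of the
   shifted noise \<Phi>^l(w) + X_l, and shifting the two-sided geometric law by d changes every
   probability by at most a factor e^(\<epsilon>|d|). Such pointwise bounds survive post-processing and
   mixing over the uniformly chosen list, which gives the word-level bound with d_max; independence
   across words multiplies these factors into exp(\<epsilon> D(s,s')). Nothing uses that the lists
   enumerate V: any nonempty family of lists will do. *)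

lemma nn_integral_count_space_int:
  fixes f :: "int \<Rightarrow> ennreal"
  shows "(\<integral>\<^sup>+x. f x \<partial>count_space UNIV)
           = (\<integral>\<^sup>+n. f (int n) \<partial>count_space UNIV) + (\<integral>\<^sup>+n. f (- int (Suc n)) \<partial>count_space UNIV)"
proof -
  let ?neg = "\<lambda>n. - int (Suc n)"
  have "x \<in> range int \<union> range ?neg" for x
  proof (cases "x \<ge> 0")
    case True
    then show ?thesis by (auto intro: image_eqI[of _ _ "nat x"])
  next
    case False
    then show ?thesis by (auto intro: image_eqI[of _ _ "nat (- x - 1)"])
  qed
  then have "(UNIV :: int set) = range int \<union> range ?neg"
    by blast
  then have "(\<integral>\<^sup>+x. f x \<partial>count_space UNIV) = (\<integral>\<^sup>+x \<in> range int \<union> range ?neg. f x \<partial>count_space UNIV)"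
    by simp
  also have "\<dots> = (\<integral>\<^sup>+x \<in> range int. f x \<partial>count_space UNIV) + (\<integral>\<^sup>+x \<in> range ?neg. f x \<partial>count_space UNIV)"
    by (rule nn_integral_disjoint_pair_countspace) auto
  also have "(\<integral>\<^sup>+x \<in> range int. f x \<partial>count_space UNIV) = (\<integral>\<^sup>+n. f (int n) \<partial>count_space UNIV)"
    by (simp add: nn_integral_count_space_indicator[symmetric] nn_integral_bij_count_space inj_on_imp_bij_betw)
  also have "(\<integral>\<^sup>+x \<in> range ?neg. f x \<partial>count_space UNIV) = (\<integral>\<^sup>+x. f x \<partial>count_space (range ?neg))"
    by (simp add: nn_integral_count_space_indicator)
  also have "\<dots> = (\<integral>\<^sup>+n. f (?neg n) \<partial>count_space UNIV)"
    by (rule nn_integral_bij_count_space[symmetric], rule inj_on_imp_bij_betw) (auto simp: inj_def)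
  finally show ?thesis .
qed

lemma nn_integral_geometric:
  fixes c q :: real
  assumes "0 \<le> c" "0 \<le> q" "q < 1"
  shows "(\<integral>\<^sup>+n. ennreal (c * q ^ n) \<partial>count_space UNIV) = ennreal (c / (1 - q))"
proof -
  have "(\<lambda>n. c * q ^ n) sums (c * (1 / (1 - q)))"
    using assms by (intro sums_mult geometric_sums) auto
  then show ?thesis
    using assms by (simp add: nn_integral_count_space_nat suminf_ennreal_eq sums_unique[symmetric])
qed

lemma two_sided_geom_density_sums_one:
  fixes \<epsilon> :: real
  assumes "\<epsilon> > 0"
  shows "(\<integral>\<^sup>+x. ennreal ((exp \<epsilon> - 1) / (exp \<epsilon> + 1) * exp (- \<epsilon> * real_of_int \<bar>x\<bar>)) \<partial>count_space UNIV) = 1"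
proof -
  define c where "c = (exp \<epsilon> - 1) / (exp \<epsilon> + 1)"
  define q where "q = exp (- \<epsilon>)"
  have "c \<ge> 0" "0 \<le> q" "q < 1"
    using assms by (auto simp: c_def q_def add_pos_pos)
  have density_nonneg: "exp (- \<epsilon> * real_of_int \<bar>int n\<bar>) = q ^ n" for n
    by (simp add: q_def exp_of_nat_mult[symmetric] mult.commute)
  have density_neg: "exp (- \<epsilon> * real_of_int \<bar>- int (Suc n)\<bar>) = q * q ^ n" for n
    by (simp add: q_def exp_of_nat_mult[symmetric] mult.commute exp_add[symmetric] algebra_simps)
  have "(\<integral>\<^sup>+x. ennreal (c * exp (- \<epsilon> * real_of_int \<bar>x\<bar>)) \<partial>count_space UNIV)
          = (\<integral>\<^sup>+n. ennreal (c * q ^ n) \<partial>count_space UNIV) + (\<integral>\<^sup>+n. ennreal ((c * q) * q ^ n) \<partial>count_space UNIV)"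
    by (subst nn_integral_count_space_int) (simp only: density_nonneg density_neg mult.assoc)
  also have "\<dots> = ennreal (c / (1 - q) + c * q / (1 - q))"
    using \<open>c \<ge> 0\<close> \<open>0 \<le> q\<close> \<open>q < 1\<close> by (simp add: nn_integral_geometric ennreal_plus)
  also have "c / (1 - q) + c * q / (1 - q) = 1"
  proof -
    have "exp \<epsilon> > 1" using assms by simp
    then have "(1 + q) / (1 - q) = (exp \<epsilon> + 1) / (exp \<epsilon> - 1)"
      by (simp add: q_def exp_minus field_simps)
    moreover have "c / (1 - q) + c * q / (1 - q) = c * ((1 + q) / (1 - q))"
      by (simp add: add_divide_distrib[symmetric] algebra_simps)
    ultimately show ?thesis
      using \<open>exp \<epsilon> > 1\<close> by (simp add: c_def)
  qed
  finally show ?thesis by (simp add: c_def)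
qed

lemma pmf_two_sided_geom:
  assumes "\<epsilon> > 0"
  shows "pmf (two_sided_geom \<epsilon>) x = (exp \<epsilon> - 1) / (exp \<epsilon> + 1) * exp (- \<epsilon> * real_of_int \<bar>x\<bar>)"
  unfolding two_sided_geom_def
proof (rule pmf_embed_pmf)
  show "0 \<le> (exp \<epsilon> - 1) / (exp \<epsilon> + 1) * exp (- \<epsilon> * real_of_int \<bar>x\<bar>)" for x :: int
    using assms by (simp add: add_pos_pos)
qed (rule two_sided_geom_density_sums_one[OF assms])

lemma pmf_two_sided_geom_le_shift:
  assumes "\<epsilon> > 0"
  shows "pmf (two_sided_geom \<epsilon>) x \<le> exp (\<epsilon> * \<bar>real_of_int d\<bar>) * pmf (two_sided_geom \<epsilon>) (x + d)"
proof -
  have "\<epsilon> * real_of_int \<bar>x + d\<bar> \<le> \<epsilon> * (real_of_int \<bar>x\<bar> + \<bar>real_of_int d\<bar>)"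
    using assms by (intro mult_left_mono) auto
  then have "- \<epsilon> * real_of_int \<bar>x\<bar> \<le> \<epsilon> * \<bar>real_of_int d\<bar> + - \<epsilon> * real_of_int \<bar>x + d\<bar>"
    by (simp add: distrib_left)
  then have "exp (- \<epsilon> * real_of_int \<bar>x\<bar>) \<le> exp (\<epsilon> * \<bar>real_of_int d\<bar>) * exp (- \<epsilon> * real_of_int \<bar>x + d\<bar>)"
    by (simp flip: exp_add)
  moreover have "(exp \<epsilon> - 1) / (exp \<epsilon> + 1) \<ge> 0"
    using assms by (simp add: add_pos_pos)
  ultimately show ?thesis
    unfolding pmf_two_sided_geom[OF assms] by (metis mult_left_mono mult.left_commute)
qed

lemma pmf_map_le_if_pmf_le:
  assumes "\<And>x. pmf p x \<le> C * pmf q x"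
  shows "pmf (map_pmf f p) y \<le> C * pmf (map_pmf f q) y"
proof -
  have "pmf (map_pmf f p) y = infsetsum (pmf p) (f -` {y})"
    by (simp add: pmf_map measure_pmf_conv_infsetsum)
  also have "\<dots> \<le> infsetsum (\<lambda>x. C * pmf q x) (f -` {y})"
    by (rule infsetsum_mono) (auto intro: abs_summable_on_cmult_right assms)
  also have "\<dots> = C * infsetsum (pmf q) (f -` {y})"
    by (rule infsetsum_cmult_right) auto
  also have "\<dots> = C * pmf (map_pmf f q) y"
    by (simp add: pmf_map measure_pmf_conv_infsetsum)
  finally show ?thesis .
qed

lemma pmf_bind_le_if_pmf_le:
  assumes "\<And>x. x \<in> set_pmf M \<Longrightarrow> pmf (p x) y \<le> C * pmf (q x) y"
  shows "pmf (M \<bind> p) y \<le> C * pmf (M \<bind> q) y"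
proof -
  have integrable: "integrable M (\<lambda>x. pmf (r x) y)" for r :: "_ \<Rightarrow> _ pmf"
    by (rule measure_pmf.integrable_const_bound[where B = 1]) (auto simp: pmf_le_1)
  have "pmf (M \<bind> p) y = (\<integral>x. pmf (p x) y \<partial>M)"
    by (rule pmf_bind)
  also have "\<dots> \<le> (\<integral>x. C * pmf (q x) y \<partial>M)"
    using assms by (intro integral_mono_AE integrable integrable_mult_right)
      (auto simp: AE_measure_pmf_iff)
  also have "\<dots> = C * pmf (M \<bind> q) y"
    by (simp add: pmf_bind)
  finally show ?thesis .
qed

definition list_mech :: "real \<Rightarrow> 'a list \<Rightarrow> 'a \<Rightarrow> 'a pmf" where
  "list_mech \<epsilon> xs w =
     map_pmf (\<lambda>x. xs ! clamp (length xs) (int (word_index xs w) + x)) (two_sided_geom \<epsilon>)"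

lemma word_mech_eq_mixture:
  assumes "L \<noteq> []"
  shows "word_mech \<epsilon> L w = pmf_of_set {..<length L} \<bind> (\<lambda>l. list_mech \<epsilon> (L ! l) w)"
proof -
  let ?X = "Pi_pmf {..<length L} 0 (\<lambda>_. two_sided_geom \<epsilon>)"
  have "word_mech \<epsilon> L w = pmf_of_set {..<length L} \<bind>
          (\<lambda>l. map_pmf (\<lambda>x. L ! l ! clamp (length (L ! l)) (int (word_index (L ! l) w) + x))
                 (map_pmf (\<lambda>X. X l) ?X))"
    unfolding word_mech_def by (subst bind_commute_pmf) (simp add: map_pmf_def bind_assoc_pmf bind_return_pmf)
  also have "\<dots> = pmf_of_set {..<length L} \<bind> (\<lambda>l. list_mech \<epsilon> (L ! l) w)"
    using assms by (intro bind_pmf_cong refl) (simp add: Pi_pmf_component list_mech_def lessThan_empty_iff)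
  finally show ?thesis .
qed

lemma pmf_list_mech_le:
  assumes "\<epsilon> > 0"
  shows "pmf (list_mech \<epsilon> xs w) z \<le> exp (\<epsilon> * real (d_list xs w w')) * pmf (list_mech \<epsilon> xs w') z"
proof -
  let ?G = "two_sided_geom \<epsilon>"
  let ?a = "int (word_index xs w)" and ?a' = "int (word_index xs w')"
  have mech: "list_mech \<epsilon> xs v = map_pmf (\<lambda>k. xs ! clamp (length xs) k) (map_pmf ((+) (int (word_index xs v))) ?G)"
    for v by (simp add: list_mech_def map_pmf_comp)
  have shift: "pmf (map_pmf ((+) a) ?G) k = pmf ?G (k - a)" for a k :: int
    using pmf_map_inj'[of "(+) a" ?G "k - a"] by (simp add: inj_def)
  have "pmf (map_pmf ((+) ?a) ?G) k \<le> exp (\<epsilon> * real (d_list xs w w')) * pmf (map_pmf ((+) ?a') ?G) k" for k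
    using pmf_two_sided_geom_le_shift[OF assms, of "k - ?a" "?a - ?a'"] by (simp add: shift d_list_def)
  then show ?thesis
    unfolding mech by (rule pmf_map_le_if_pmf_le)
qed

lemma pmf_word_mech_le:
  assumes "L \<noteq> []" and "\<epsilon> > 0"
  shows "pmf (word_mech \<epsilon> L w) z \<le> exp (\<epsilon> * real (d_max L w w')) * pmf (word_mech \<epsilon> L w') z"
  unfolding word_mech_eq_mixture[OF assms(1)]
proof (rule pmf_bind_le_if_pmf_le)
  fix l assume "l \<in> set_pmf (pmf_of_set {..<length L})"
  then have "l < length L"
    using assms(1) by (simp add: lessThan_empty_iff)
  then have "d_list (L ! l) w w' \<le> d_max L w w'"
    unfolding d_max_def by (intro Max_ge) auto
  then have "exp (\<epsilon> * real (d_list (L ! l) w w')) \<le> exp (\<epsilon> * real (d_max L w w'))"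
    using assms(2) by simp
  with pmf_list_mech_le[OF assms(2)]
  show "pmf (list_mech \<epsilon> (L ! l) w) z \<le> exp (\<epsilon> * real (d_max L w w')) * pmf (list_mech \<epsilon> (L ! l) w') z"
    by (rule order.trans[OF _ mult_right_mono]) simp
qed

lemma sent_mech_Cons:
  "sent_mech \<epsilon> L (w # ws) = map_pmf (\<lambda>(y, ys). y # ys) (pair_pmf (word_mech \<epsilon> L w) (sent_mech \<epsilon> L ws))"
  by (simp add: pair_pmf_def map_bind_pmf map_return_pmf)

lemma pmf_sent_mech_Cons_Cons:
  "pmf (sent_mech \<epsilon> L (w # ws)) (y # ys) = pmf (word_mech \<epsilon> L w) y * pmf (sent_mech \<epsilon> L ws) ys"
  unfolding sent_mech_Cons using pmf_map_inj'[of "\<lambda>(y, ys). y # ys" _ "(y, ys)"]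
  by (simp add: pmf_pair inj_def)

lemma pmf_sent_mech_Cons_Nil: "pmf (sent_mech \<epsilon> L (w # ws)) [] = 0"
  unfolding sent_mech_Cons by (simp add: pmf_map vimage_def split_def)

lemma sent_dist_Cons:
  "sent_dist L (w # ws) (w' # ws') = d_max L w w' + sent_dist L ws ws'"
  unfolding sent_dist_def length_Cons sum.lessThan_Suc_shift by simp

lemma pmf_sent_mech_le:
  assumes "L \<noteq> []" and "\<epsilon> > 0" and "length s = length s'"
  shows "pmf (sent_mech \<epsilon> L s) z \<le> exp (\<epsilon> * real (sent_dist L s s')) * pmf (sent_mech \<epsilon> L s') z"
  using assms(3)
proof (induction s s' arbitrary: z rule: list_induct2)
  case Nil
  then show ?case
    by (simp add: sent_dist_def)
next
  case (Cons w ws w' ws')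
  show ?case
  proof (cases z)
    case Nil
    then show ?thesis
      unfolding Nil pmf_sent_mech_Cons_Nil by simp
  next
    case (Cons y ys)
    have "pmf (word_mech \<epsilon> L w) y * pmf (sent_mech \<epsilon> L ws) ys
            \<le> exp (\<epsilon> * real (d_max L w w')) * pmf (word_mech \<epsilon> L w') y
              * (exp (\<epsilon> * real (sent_dist L ws ws')) * pmf (sent_mech \<epsilon> L ws') ys)"
      by (intro mult_mono pmf_word_mech_le Cons.IH assms) auto
    then show ?thesis
      unfolding Cons pmf_sent_mech_Cons_Cons sent_dist_Cons by (simp add: distrib_left exp_add mult_ac)
  qed
qed

theorem theorem3p2:
  fixes V :: "'a set" and N m n :: nat and \<epsilon> :: real
    and L :: "'a list list" and s s' z :: "'a list"
  assumes "finite V" and "card V = N" and "\<epsilon> > 0"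
    and "m \<ge> 1" and "length L = m"
    and "\<forall>l<m. distinct (L ! l) \<and> set (L ! l) = V"
    and "length s = n" and "length s' = n" and "length z = n"
    and "set s \<subseteq> V" and "set s' \<subseteq> V" and "set z \<subseteq> V"
  shows "pmf (sent_mech \<epsilon> L s) z / pmf (sent_mech \<epsilon> L s') z
           \<le> exp (\<epsilon> * real (sent_dist L s s'))"
proof -
  have bound: "pmf (sent_mech \<epsilon> L s) z \<le> exp (\<epsilon> * real (sent_dist L s s')) * pmf (sent_mech \<epsilon> L s') z"
    using assms by (intro pmf_sent_mech_le) auto
  show ?thesis
  proof (cases "pmf (sent_mech \<epsilon> L s') z = 0")
    case True
    then show ?thesis by simp
  next
    case False
    then have "pmf (sent_mech \<epsilon> L s') z > 0"
      using pmf_nonneg order_le_less by metis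
    with bound show ?thesis
      by (simp add: divide_le_eq)
  qed
qed

end
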